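(* Let $V$ be real-valued and absolutely continuous on $[0,\pi]$ and let $a\in(0,\pi)$. There is a constant $C>0$ (depending on $V$ and $a$) such that for all $z\in\mathbb C$ and $n\in\mathbb N$, $$\left|\int_0^\pi F(x,z)\,\mathcal R_{a\pi}(x)\cos(nx)\,dx\right|\le C\frac{e^{\pi|\operatorname{Im}\sqrt z|}}{n^2}\left(1+\frac{1+|z|}{1+\pi|z|^{1/2}}\right).$$
   Context: $\sqrt{\cdot}$ is the principal branch. $\xi(x,z)$ is the solution of $-\xi''+V\xi=z\xi$, $\xi(0,z)=1$, $\xi'(0,z)=0$, and $F(x,z):=\xi(x,z)-\cos(\sqrt z\,x)$. $\mathcal R_{a\pi}(x)=1$ for $x\in[0,a]$ and $\frac{\pi-x}{\pi-a}$ for $x\in(a,\pi]$. *)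

theory Defs
  imports "HOL-Analysis.Analysis"
begin

definition abs_continuous_on :: "real \<Rightarrow> real \<Rightarrow> (real \<Rightarrow> real) \<Rightarrow> bool" where
  "abs_continuous_on a b f \<longleftrightarrow>
     (\<forall>\<epsilon>>0. \<exists>\<delta>>0. \<forall>(n::nat) (u::nat \<Rightarrow> real) (v::nat \<Rightarrow> real).
        (\<forall>i<n. a \<le> u i \<and> u i \<le> v i \<and> v i \<le> b) \<and>
        (\<forall>i<n. \<forall>j<n. i \<noteq> j \<longrightarrow> v i \<le> u j \<or> v j \<le> u i) \<and>
        (\<Sum>i<n. v i - u i) < \<delta>
        \<longrightarrow> (\<Sum>i<n. \<bar>f (v i) - f (u i)\<bar>) < \<epsilon>)"

definition is_xi_solution ::
  "(real \<Rightarrow> real) \<Rightarrow> complex \<Rightarrow> (real \<Rightarrow> complex) \<Rightarrow> (real \<Rightarrow> complex) \<Rightarrow> bool" where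
  "is_xi_solution V z xi dxi \<longleftrightarrow>
     xi 0 = 1 \<and> dxi 0 = 0 \<and>
     (\<forall>x\<in>{0..pi}. (xi has_vector_derivative dxi x) (at x within {0..pi})) \<and>
     (\<forall>x\<in>{0..pi}. (dxi has_vector_derivative ((complex_of_real (V x) - z) * xi x))
                      (at x within {0..pi}))"

definition R_api :: "real \<Rightarrow> real \<Rightarrow> real" where
  "R_api a x = (if x \<le> a then 1 else (pi - x) / (pi - a))"

end

theory Submission
  imports Defs
begin

text \<open>Write F = \<xi> - cos (\<surd>z x), so that F'' = V \<xi> - z F. Integrating by parts twice against
  R_a\<pi>(x) cos (n x), which is piecewise affine in x and vanishes at \<pi>, bounds the integral by
  (sup |F| + sup |F'| + sup |F''|) / n^2 times a factor depending on a. It therefore suffices to bound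
  these suprema by a multiple of (1 + |\<surd>z|) exp (\<pi> |Im \<surd>z|); the elementary inequality
  1 + |\<surd>z| \<le> 2\<pi> (1 + (1 + |z|) / (1 + \<pi> |z|^(1/2))) then gives the claim. Absolute continuity
  of V is used only through a bound |V| \<le> M.

  For |\<surd>z| \<le> 1, Gronwall's inequality for |\<xi>|^2 + |\<xi>'|^2 suffices. For |\<surd>z| \<ge> 1 the operator
  factors, and \<xi>' \<plusminus> i \<surd>z \<xi> satisfy first-order equations driven by V \<xi>. Gronwall's inequality for
  the sum of their squared moduli gives |\<xi>(x)| \<le> exp (M \<pi>) exp (|Im \<surd>z| x); variation of constants
  then keeps them within O(exp (|Im \<surd>z| x)) of their free values \<plusminus> i \<surd>z exp (\<plusminus> i \<surd>z x), and adding
  and subtracting the two estimates bounds F' and \<surd>z F.\<close>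

lemma abs_continuous_on_imp_continuous_on:
  assumes "abs_continuous_on a b f"
  shows "continuous_on {a..b} f"
  unfolding continuous_on_iff
proof (intro ballI allI impI)
  fix x e :: real
  assume x: "x \<in> {a..b}" and e: "0 < e"
  obtain d where d: "d > 0" and small_var: "\<forall>(n::nat) u v. (\<forall>i<n. a \<le> u i \<and> u i \<le> v i \<and> v i \<le> b) \<and>
      (\<forall>i<n. \<forall>j<n. i \<noteq> j \<longrightarrow> v i \<le> u j \<or> v j \<le> u i) \<and> (\<Sum>i<n. v i - u i) < d
      \<longrightarrow> (\<Sum>i<n. \<bar>f (v i) - f (u i)\<bar>) < e"
    using assms e unfolding abs_continuous_on_def by blast
  show "\<exists>d>0. \<forall>x'\<in>{a..b}. dist x' x < d \<longrightarrow> dist (f x') (f x) < e"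
  proof (intro exI[of _ d] conjI ballI impI d)
    fix x' assume x': "x' \<in> {a..b}" and "dist x' x < d"
    then have "(\<Sum>i<(1::nat). \<bar>f ((\<lambda>_. max x x') i) - f ((\<lambda>_. min x x') i)\<bar>) < e"
      using x by (intro small_var[rule_format]) (auto simp: dist_real_def)
    then show "dist (f x') (f x) < e"
      by (auto simp: dist_real_def max_def min_def abs_minus_commute split: if_splits)
  qed
qed

lemma gronwall_has_real_derivative:
  fixes E E' :: "real \<Rightarrow> real"
  assumes deriv: "\<And>t. t \<in> {0..b} \<Longrightarrow> (E has_real_derivative E' t) (at t within {0..b})"
    and growth: "\<And>t. t \<in> {0..b} \<Longrightarrow> E' t \<le> L * E t"
    and x: "0 \<le> x" "x \<le> b"
  shows "E x \<le> E 0 * exp (L * x)"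
proof -
  define f where "f t = E t * exp (- L * t)" for t
  have df: "(f has_derivative (*) ((E' t - L * E t) * exp (- L * t))) (at t within {0..x})"
    if t: "t \<in> {0..x}" for t
  proof -
    have "(E has_real_derivative E' t) (at t within {0..x})"
      using deriv[of t] t x by (auto intro: DERIV_subset)
    then have "(f has_real_derivative E' t * exp (- L * t) + E t * (exp (- L * t) * (- L)))
        (at t within {0..x})"
      unfolding f_def by (auto intro!: derivative_eq_intros)
    then show ?thesis
      by (simp add: has_field_derivative_def algebra_simps)
  qed
  obtain t where t: "t \<in> {0..x}" and mvt: "f x - f 0 = ((E' t - L * E t) * exp (- L * t)) * (x - 0)"
    using mvt_very_simple[OF x(1), of f "\<lambda>t. (*) ((E' t - L * E t) * exp (- L * t))"] df by auto
  have "E' t - L * E t \<le> 0"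
    using growth[of t] t x by auto
  then have "(E' t - L * E t) * exp (- L * t) * (x - 0) \<le> 0"
    using x by (intro mult_nonpos_nonneg) auto
  then have "f x \<le> f 0"
    using mvt by simp
  then have "E x * exp (- L * x) * exp (L * x) \<le> E 0 * exp (L * x)"
    by (simp add: f_def)
  then show ?thesis
    by (simp add: exp_minus field_simps)
qed

lemma has_real_derivative_norm_power2:
  fixes p :: "real \<Rightarrow> 'a::real_inner"
  assumes "(p has_vector_derivative d) (at x within S)"
  shows "((\<lambda>t. (norm (p t))\<^sup>2) has_real_derivative 2 * (p x \<bullet> d)) (at x within S)"
proof -
  have "(p has_derivative (\<lambda>h. h *\<^sub>R d)) (at x within S)"
    using assms by (simp add: has_vector_derivative_def)
  from has_derivative_inner[OF this this]
  show ?thesis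
    unfolding has_field_derivative_def power2_norm_eq_inner
    by (rule has_derivative_eq_rhs) (auto simp: inner_commute algebra_simps)
qed

lemma norm_diff_le_vector_derivative_bound:
  fixes g :: "real \<Rightarrow> 'a::banach"
  assumes ab: "a \<le> b"
    and deriv: "\<And>t. t \<in> {a..b} \<Longrightarrow> (g has_vector_derivative g' t) (at t within {a..b})"
    and bound: "\<And>t. t \<in> {a..b} \<Longrightarrow> norm (g' t) \<le> B"
  shows "norm (g b - g a) \<le> B * (b - a)"
proof -
  have "(g' has_integral (g b - g a)) {a..b}"
    by (rule fundamental_theorem_of_calculus[OF ab]) (use deriv in auto)
  moreover have "0 \<le> B"
    using bound[of a] ab by (auto intro: order_trans[OF norm_ge_zero])
  ultimately have "norm (g b - g a) \<le> B * Henstock_Kurzweil_Integration.content {a..b}"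
    using bound by (intro has_integral_bound_real[where S="{}"]) auto
  then show ?thesis
    using ab by simp
qed

lemma has_integral_times_cos_by_parts:
  fixes h h1 h2 :: "real \<Rightarrow> complex"
  assumes cd: "c \<le> d" and N: "N > 0"
    and dh: "\<And>x. x \<in> {c..d} \<Longrightarrow> (h has_vector_derivative h1 x) (at x within {c..d})"
    and dh1: "\<And>x. x \<in> {c..d} \<Longrightarrow> (h1 has_vector_derivative h2 x) (at x within {c..d})"
    and bound: "\<And>x. x \<in> {c..d} \<Longrightarrow> cmod (h2 x) \<le> B"
  shows "\<exists>J. ((\<lambda>x. h x * of_real (cos (N*x))) has_integral
              ((h d * of_real (sin (N*d)/N) + h1 d * of_real (cos (N*d)/N^2))
              - (h c * of_real (sin (N*c)/N) + h1 c * of_real (cos (N*c)/N^2)) - J)) {c..d}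
          \<and> cmod J \<le> B * (d - c) / N^2"
proof -
  define \<Phi> where "\<Phi> x = h x * of_real (sin (N*x)/N) + h1 x * of_real (cos (N*x)/N^2)" for x
  have d\<Phi>: "(\<Phi> has_vector_derivative (h x * of_real (cos (N*x)) + h2 x * of_real (cos (N*x)/N^2)))
      (at x within {c..d})" if x: "x \<in> {c..d}" for x
  proof -
    have "((\<lambda>x. sin (N*x)/N) has_real_derivative cos (N*x)) (at x within {c..d})"
      and "((\<lambda>x. cos (N*x)/N^2) has_real_derivative - (sin (N*x)/N)) (at x within {c..d})"
      using N by (auto intro!: derivative_eq_intros simp: power2_eq_square)
    then have "(\<Phi> has_vector_derivative
        (h x * of_real (cos (N*x)) + h1 x * of_real (sin (N*x)/N))
        + (h1 x * of_real (- (sin (N*x)/N)) + h2 x * of_real (cos (N*x)/N^2))) (at x within {c..d})"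
      unfolding \<Phi>_def
      by (intro has_vector_derivative_add has_vector_derivative_mult dh dh1 x
          has_vector_derivative_of_real)
    then show ?thesis
      by (rule has_vector_derivative_eq_rhs) (simp add: algebra_simps)
  qed
  have ftc: "((\<lambda>x. h x * of_real (cos (N*x)) + h2 x * of_real (cos (N*x)/N^2)) has_integral
      (\<Phi> d - \<Phi> c)) {c..d}"
    by (rule fundamental_theorem_of_calculus[OF cd]) (use d\<Phi> in auto)
  have "continuous_on {c..d} h"
    unfolding continuous_on_eq_continuous_within
    using dh has_vector_derivative_continuous by blast
  then have "(\<lambda>x. h x * of_real (cos (N*x))) integrable_on {c..d}"
    by (intro integrable_continuous_real continuous_intros) auto
  then obtain I where I: "((\<lambda>x. h x * of_real (cos (N*x))) has_integral I) {c..d}"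
    by auto
  define J where "J = \<Phi> d - \<Phi> c - I"
  have "((\<lambda>x. h2 x * of_real (cos (N*x)/N^2)) has_integral J) {c..d}"
    using has_integral_diff[OF ftc I] by (simp add: J_def)
  moreover have "cmod (h2 x * of_real (cos (N*x)/N^2)) \<le> B / N^2" if "x \<in> {c..d}" for x
  proof -
    have "cmod (h2 x * of_real (cos (N*x)/N^2)) = cmod (h2 x) * (\<bar>cos (N*x)\<bar> / N^2)"
      by (simp add: norm_mult norm_divide norm_power)
    also have "\<dots> \<le> B * (1 / N^2)"
      using bound[OF that] N by (intro mult_mono divide_right_mono) (auto intro: order_trans[OF norm_ge_zero])
    finally show ?thesis
      by simp
  qed
  moreover have "0 \<le> B"
    using bound[of c] cd by (auto intro: order_trans[OF norm_ge_zero])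
  ultimately have "cmod J \<le> B / N^2 * Henstock_Kurzweil_Integration.content {c..d}"
    by (intro has_integral_bound_real[where S="{}"]) auto
  then have "cmod J \<le> B * (d - c) / N^2"
    using cd by simp
  moreover have "I = \<Phi> d - \<Phi> c - J"
    by (simp add: J_def)
  ultimately show ?thesis
    using I unfolding \<Phi>_def by blast
qed

lemma has_integral_ramp_times_cos_by_parts:
  fixes F F1 F2 :: "real \<Rightarrow> complex"
  assumes ab: "a < b" and N: "N > 0"
    and dF: "\<And>x. x \<in> {a..b} \<Longrightarrow> (F has_vector_derivative F1 x) (at x within {a..b})"
    and dF1: "\<And>x. x \<in> {a..b} \<Longrightarrow> (F1 has_vector_derivative F2 x) (at x within {a..b})"
    and bounds: "\<And>x. x \<in> {a..b} \<Longrightarrow> cmod (F1 x) \<le> B \<and> cmod (F2 x) \<le> B"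
  defines "k \<equiv> 1 / (b - a)"
  shows "\<exists>J. ((\<lambda>x. F x * of_real (k * (b - x)) * of_real (cos (N*x))) has_integral
              (- F b * of_real (k * cos (N*b) / N^2)
               - (F a * of_real (sin (N*a)/N) + (F1 a - F a * of_real k) * of_real (cos (N*a)/N^2))
               - J)) {a..b}
          \<and> cmod J \<le> (B + 2*k*B) * (b - a) / N^2"
proof -
  define r where "r x = k * (b - x)" for x
  define h where "h x = F x * of_real (r x)" for x
  define h1 where "h1 x = F1 x * of_real (r x) - F x * of_real k" for x
  define h2 where "h2 x = F2 x * of_real (r x) - 2 * F1 x * of_real k" for x
  have k: "k > 0" and r_a: "r a = 1" and r_b: "r b = 0"
    using ab by (simp_all add: k_def r_def)
  have dr: "(r has_real_derivative -k) (at x within {a..b})" for x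
    unfolding r_def by (auto intro!: derivative_eq_intros)
  have dh: "(h has_vector_derivative h1 x) (at x within {a..b})" if x: "x \<in> {a..b}" for x
  proof -
    have "(h has_vector_derivative F x * of_real (-k) + F1 x * of_real (r x)) (at x within {a..b})"
      unfolding h_def using x by (intro has_vector_derivative_mult has_vector_derivative_of_real dr dF)
    then show ?thesis
      by (rule has_vector_derivative_eq_rhs) (simp add: h1_def algebra_simps)
  qed
  have dh1: "(h1 has_vector_derivative h2 x) (at x within {a..b})" if x: "x \<in> {a..b}" for x
  proof -
    have "(h1 has_vector_derivative (F1 x * of_real (-k) + F2 x * of_real (r x)) - F1 x * of_real k)
       (at x within {a..b})"
      unfolding h1_def using x
      by (intro has_vector_derivative_diff has_vector_derivative_mult has_vector_derivative_of_real dr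
          has_vector_derivative_mult_left dF dF1)
    then show ?thesis
      by (rule has_vector_derivative_eq_rhs) (simp add: h2_def algebra_simps)
  qed
  have h2_bound: "cmod (h2 x) \<le> B + 2*k*B" if x: "x \<in> {a..b}" for x
  proof -
    have r: "0 \<le> r x" "r x \<le> 1"
      using x ab by (auto simp: r_def k_def field_simps)
    have "0 \<le> B"
      using bounds[OF x] by (auto intro: order_trans[OF norm_ge_zero])
    have "cmod (h2 x) \<le> cmod (F2 x) * r x + 2 * cmod (F1 x) * k"
      unfolding h2_def using r k norm_triangle_ineq4[of "F2 x * of_real (r x)" "2 * F1 x * of_real k"]
      by (simp add: norm_mult)
    also have "\<dots> \<le> B * 1 + 2 * B * k"
      using r k bounds[OF x] \<open>0 \<le> B\<close> by (intro add_mono mult_mono) auto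
    finally show ?thesis
      by (simp add: algebra_simps)
  qed
  have boundary: "h b * of_real (sin (N*b)/N) + h1 b * of_real (cos (N*b)/N^2)
      - (h a * of_real (sin (N*a)/N) + h1 a * of_real (cos (N*a)/N^2))
      = - F b * of_real (k * cos (N*b) / N^2)
        - (F a * of_real (sin (N*a)/N) + (F1 a - F a * of_real k) * of_real (cos (N*a)/N^2))"
    by (simp add: h_def h1_def r_a r_b)
  show ?thesis
    using has_integral_times_cos_by_parts[OF less_imp_le[OF ab] N dh dh1 h2_bound, unfolded boundary]
    unfolding h_def r_def by blast
qed

lemma integral_R_api_times_cos_bound:
  fixes F F1 F2 :: "real \<Rightarrow> complex" and n :: nat
  assumes a: "0 < a" "a < pi" and n: "n \<ge> 1"
    and dF: "\<And>x. x \<in> {0..pi} \<Longrightarrow> (F has_vector_derivative F1 x) (at x within {0..pi})"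
    and dF1: "\<And>x. x \<in> {0..pi} \<Longrightarrow> (F1 has_vector_derivative F2 x) (at x within {0..pi})"
    and bounds: "\<And>x. x \<in> {0..pi} \<Longrightarrow> cmod (F x) \<le> B \<and> cmod (F1 x) \<le> B \<and> cmod (F2 x) \<le> B"
  shows "cmod (integral {0..pi} (\<lambda>x. F x * of_real (R_api a x) * of_real (cos (real n * x))))
         \<le> (3 + 2/(pi-a) + pi) * B / (real n)^2"
proof -
  define N where "N = real n"
  define k where "k = 1/(pi-a)"
  define f where "f x = F x * of_real (R_api a x) * of_real (cos (N * x))" for x
  have N: "N > 0" and k: "k > 0" and B: "0 \<le> B"
    using n a bounds[of 0] by (auto simp: N_def k_def intro: order_trans[OF norm_ge_zero])
  have restrict: "(F has_vector_derivative F1 x) (at x within {c..d})"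
    "(F1 has_vector_derivative F2 x) (at x within {c..d})"
    "cmod (F x) \<le> B \<and> cmod (F1 x) \<le> B \<and> cmod (F2 x) \<le> B"
    if "{c..d} \<subseteq> {0..pi}" "x \<in> {c..d}" for c d x
    using that bounds[of x] has_vector_derivative_within_subset[OF dF that(1)]
      has_vector_derivative_within_subset[OF dF1 that(1)] by auto
  have sub: "{0..a} \<subseteq> {0..pi}" "{a..pi} \<subseteq> {0..pi}"
    using a by auto
  obtain J1 where J1: "((\<lambda>x. F x * of_real (cos (N*x))) has_integral
        ((F a * of_real (sin (N*a)/N) + F1 a * of_real (cos (N*a)/N^2))
         - (F 0 * of_real (sin (N*0)/N) + F1 0 * of_real (cos (N*0)/N^2)) - J1)) {0..a}"
      and J1_bound: "cmod J1 \<le> B * (a - 0) / N^2"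
    using has_integral_times_cos_by_parts[of 0 a N F F1 F2 B] a N restrict[OF sub(1)] by auto
  obtain J2 where J2: "((\<lambda>x. F x * of_real (k * (pi - x)) * of_real (cos (N*x))) has_integral
        (- F pi * of_real (k * cos (N*pi) / N^2)
         - (F a * of_real (sin (N*a)/N) + (F1 a - F a * of_real k) * of_real (cos (N*a)/N^2))
         - J2)) {a..pi}"
      and J2_bound: "cmod J2 \<le> (B + 2*k*B) * (pi - a) / N^2"
    using has_integral_ramp_times_cos_by_parts[of a pi N F F1 F2 B] a N restrict[OF sub(2)]
    unfolding k_def by auto
  have f_0a: "(f has_integral I) {0..a}"
    if "((\<lambda>x. F x * of_real (cos (N*x))) has_integral I) {0..a}" for I
    by (rule has_integral_eq[OF _ that]) (auto simp: f_def R_api_def)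
  have f_api: "(f has_integral I) {a..pi}"
    if "((\<lambda>x. F x * of_real (k * (pi - x)) * of_real (cos (N*x))) has_integral I) {a..pi}" for I
    by (rule has_integral_eq[OF _ that]) (use a in \<open>auto simp: f_def R_api_def k_def\<close>)
  \<comment> \<open>the \<open>sin\<close> boundary terms cancel at \<open>a\<close> and vanish at \<open>0\<close> and \<open>\<pi>\<close>\<close>
  from a have "integral {0..pi} f = F a * of_real (k * cos (N*a)/N^2) - F1 0 * of_real (1/N^2)
     - F pi * of_real (k * cos (N*pi)/N^2) - J1 - J2"
    using N by (subst integral_unique[OF has_integral_combine[OF _ _ f_0a[OF J1] f_api[OF J2]]])
      (simp_all add: field_simps)
  then have "cmod (integral {0..pi} f) \<le> cmod (F a) * (k * \<bar>cos (N*a)\<bar>/N^2) + cmod (F1 0) * (1/N^2)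
     + cmod (F pi) * (k * \<bar>cos (N*pi)\<bar>/N^2) + cmod J1 + cmod J2"
    using k by (auto simp: norm_mult norm_divide norm_power
        intro!: order_trans[OF norm_triangle_ineq4] add_mono order_trans[OF norm_triangle_ineq])
  also have "\<dots> \<le> B * (k / N^2) + B * (1/N^2) + B * (k / N^2) + B * a / N^2 + (B + 2*k*B) * (pi - a) / N^2"
    using J1_bound J2_bound bounds[of a] bounds[of pi] bounds[of 0] a k N B
    by (intro add_mono mult_mono divide_right_mono) auto
  also have "\<dots> = (3 + 2*k + pi) * B / N^2"
  proof -
    have "k * (pi - a) = 1"
      using a by (simp add: k_def)
    moreover have "(B + 2*k*B) * (pi - a) = B * (pi - a) + 2 * B * (k * (pi - a))"
      by (simp add: algebra_simps)
    ultimately have "(B + 2*k*B) * (pi - a) = B * (pi - a) + 2 * B"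
      by simp
    then show ?thesis
      using N by (simp add: field_simps)
  qed
  finally show ?thesis
    by (simp add: f_def[abs_def] N_def k_def)
qed

lemma inner_rotation_le:
  fixes p w :: complex
  shows "p \<bullet> (\<i> * \<sigma> * p + w) \<le> \<bar>Im \<sigma>\<bar> * (cmod p)\<^sup>2 + cmod p * cmod w"
proof -
  have "p \<bullet> (\<i> * \<sigma> * p) = - Im \<sigma> * (cmod p)\<^sup>2"
    by (simp add: inner_complex_def cmod_power2) (simp add: power2_eq_square algebra_simps)
  moreover have "p \<bullet> w \<le> cmod p * cmod w"
    by (metis Cauchy_Schwarz_ineq2 abs_le_D1)
  moreover have "- Im \<sigma> * (cmod p)\<^sup>2 \<le> \<bar>Im \<sigma>\<bar> * (cmod p)\<^sup>2"
    by (intro mult_right_mono) auto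
  ultimately show ?thesis
    by (simp add: inner_add_right)
qed

lemma one_plus_sqrt_le:
  fixes w :: real
  assumes w: "0 \<le> w"
  shows "1 + sqrt w \<le> 2 * pi * (1 + (1 + w) / (1 + pi * sqrt w))"
proof -
  define t where "t = sqrt w"
  have t: "0 \<le> t" "w = t\<^sup>2"
    using w by (simp_all add: t_def)
  have frac: "0 \<le> (1 + w) / (1 + pi * t)"
    using t by simp
  show ?thesis
  proof (cases "t \<le> 1")
    case True
    have "2 * pi * 1 \<le> 2 * pi * (1 + (1 + w) / (1 + pi * t))"
      using frac by (intro mult_left_mono) auto
    moreover have "1 + t \<le> 2 * pi * 1"
      using True pi_gt3 by simp
    ultimately show ?thesis
      unfolding t_def by linarith
  next
    case False
    have "t * (1 + pi * t) \<le> t * (2 * pi * t)"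
      using False pi_gt3 mult_mono[of 1 pi 1 t] by (intro mult_left_mono) auto
    also have "\<dots> \<le> 2 * pi * (1 + w)"
      by (simp add: t power2_eq_square algebra_simps)
    finally have "t \<le> 2 * pi * ((1 + w) / (1 + pi * t))"
      using False pi_gt3 by (simp add: field_simps add_pos_pos)
    then show ?thesis
      using pi_gt3 by (simp add: t_def algebra_simps)
  qed
qed

text \<open>The term \<open>exp (M \<pi>) (1 + \<pi>)\<close> comes from the case \<open>1 \<le> |\<surd>z|\<close> of \<open>norm_cos_deviation_le\<close>, the
  other two from the case \<open>|\<surd>z| \<le> 1\<close>.\<close>
definition deviation_constant :: "real \<Rightarrow> real" where
  "deviation_constant M = (M + 1) * (exp (M * pi) * (1 + pi) + exp ((M + 2) * pi / 2) + exp pi)"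

lemma deviation_constant_pos: "0 \<le> M \<Longrightarrow> 0 < deviation_constant M"
  by (simp add: deviation_constant_def add_pos_pos)

locale xi_ivp =
  fixes V :: "real \<Rightarrow> real" and M :: real and z :: complex and y y' :: "real \<Rightarrow> complex"
  assumes solution: "is_xi_solution V z y y'"
    and V_bound: "\<And>x. x \<in> {0..pi} \<Longrightarrow> \<bar>V x\<bar> \<le> M"
begin

lemma y_0: "y 0 = 1"
  and y'_0: "y' 0 = 0"
  and has_vector_derivative_y: "x \<in> {0..pi} \<Longrightarrow> (y has_vector_derivative y' x) (at x within {0..pi})"
  and has_vector_derivative_y':
    "x \<in> {0..pi} \<Longrightarrow> (y' has_vector_derivative (of_real (V x) - z) * y x) (at x within {0..pi})"
  using solution by (auto simp: is_xi_solution_def)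

lemma M_nonneg: "0 \<le> M"
  using V_bound[of 0] by auto

lemma norm_V_mult_le: "x \<in> {0..pi} \<Longrightarrow> cmod (of_real (V x) * w) \<le> M * cmod w"
  using V_bound by (simp add: norm_mult mult_right_mono)

lemma norm_y_y'_le_if_small:
  assumes z: "cmod z \<le> 1" and x: "x \<in> {0..pi}"
  shows "cmod (y x) \<le> exp ((M + 2) * pi / 2) \<and> cmod (y' x) \<le> exp ((M + 2) * pi / 2)"
proof -
  define E where "E t = (cmod (y' t))\<^sup>2 + (cmod (y t))\<^sup>2" for t
  define E' where "E' t = 2 * (y' t \<bullet> ((of_real (V t) - z) * y t)) + 2 * (y t \<bullet> y' t)" for t
  have dE: "(E has_real_derivative E' t) (at t within {0..pi})" if "t \<in> {0..pi}" for t
    unfolding E_def E'_def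
    by (intro DERIV_add has_real_derivative_norm_power2 has_vector_derivative_y has_vector_derivative_y' that)
  have E'_le: "E' t \<le> (M + 2) * E t" if t: "t \<in> {0..pi}" for t
  proof -
    have "cmod (of_real (V t) - z) \<le> M + 1"
      using V_bound[OF t] z norm_triangle_ineq4[of "of_real (V t)" z] by simp
    then have "cmod ((of_real (V t) - z) * y t) \<le> (M + 1) * cmod (y t)"
      by (simp add: norm_mult mult_right_mono)
    then have "y' t \<bullet> ((of_real (V t) - z) * y t) \<le> cmod (y' t) * ((M + 1) * cmod (y t))"
      by (meson Cauchy_Schwarz_ineq2 abs_le_D1 mult_left_mono norm_ge_zero order_trans)
    moreover have "y t \<bullet> y' t \<le> cmod (y t) * cmod (y' t)"
      by (metis Cauchy_Schwarz_ineq2 abs_le_D1)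
    ultimately have "E' t \<le> (M + 2) * (2 * cmod (y t) * cmod (y' t))"
      unfolding E'_def by (simp add: algebra_simps)
    also have "\<dots> \<le> (M + 2) * E t"
      unfolding E_def using sum_squares_bound[of "cmod (y t)" "cmod (y' t)"] M_nonneg
      by (intro mult_left_mono) auto
    finally show ?thesis .
  qed
  have "E x \<le> E 0 * exp ((M + 2) * x)"
    by (rule gronwall_has_real_derivative[of pi E E']) (use dE E'_le x in auto)
  also have "\<dots> \<le> exp ((M + 2) * pi)"
    using x M_nonneg by (auto simp: E_def y_0 y'_0 intro: mult_left_mono)
  also have "\<dots> = (exp ((M + 2) * pi / 2))\<^sup>2"
    by (simp add: exp_double[symmetric])
  finally have "(cmod (y x))\<^sup>2 \<le> (exp ((M + 2) * pi / 2))\<^sup>2 \<and> (cmod (y' x))\<^sup>2 \<le> (exp ((M + 2) * pi / 2))\<^sup>2"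
    unfolding E_def using zero_le_power2[of "cmod (y x)"] zero_le_power2[of "cmod (y' x)"] by linarith
  then show ?thesis
    by (auto intro: power2_le_imp_le)
qed

text \<open>The factorisation \<open>-d\<^sup>2/dx\<^sup>2 - z = -(d/dx - i s)(d/dx + i s)\<close> for \<open>s\<^sup>2 = z\<close>.\<close>
lemma has_vector_derivative_factor:
  assumes s: "s\<^sup>2 = z" and t: "t \<in> {0..pi}"
  shows "((\<lambda>t. y' t + \<i> * s * y t) has_vector_derivative
           \<i> * s * (y' t + \<i> * s * y t) + of_real (V t) * y t) (at t within {0..pi})"
proof -
  have "((\<lambda>t. y' t + \<i> * s * y t) has_vector_derivative (of_real (V t) - z) * y t + \<i> * s * y' t)
      (at t within {0..pi})"
    by (intro has_vector_derivative_add has_vector_derivative_mult_right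
        has_vector_derivative_y has_vector_derivative_y' t)
  then show ?thesis
    by (rule has_vector_derivative_eq_rhs) (simp add: s[symmetric] algebra_simps power2_eq_square)
qed

text \<open>Energy \<open>|y' + i s y|\<^sup>2 + |y' - i s y|\<^sup>2\<close>; the hypothesis \<open>1 \<le> |s|\<close> lets it control the
  forcing term \<open>V y\<close>.\<close>
lemma norm_y_le_exp_if_large:
  assumes s: "s\<^sup>2 = z" and s1: "1 \<le> cmod s" and x: "x \<in> {0..pi}"
  shows "cmod (y x) \<le> exp (M * pi) * exp (\<bar>Im s\<bar> * x)"
proof -
  define \<tau> where "\<tau> = \<bar>Im s\<bar>"
  define p where "p t = y' t + \<i> * s * y t" for t
  define q where "q t = y' t + \<i> * (- s) * y t" for t
  define E where "E t = (cmod (p t))\<^sup>2 + (cmod (q t))\<^sup>2" for t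
  define E' where "E' t = 2 * (p t \<bullet> (\<i> * s * p t + of_real (V t) * y t))
      + 2 * (q t \<bullet> (\<i> * (- s) * q t + of_real (V t) * y t))" for t
  have dE: "(E has_real_derivative E' t) (at t within {0..pi})" if "t \<in> {0..pi}" for t
    unfolding E_def E'_def p_def q_def using s that
    by (intro DERIV_add has_real_derivative_norm_power2 has_vector_derivative_factor) auto
  have pq: "2 * cmod s * cmod (y t) \<le> cmod (p t) + cmod (q t)" for t
  proof -
    have "2 * cmod s * cmod (y t) = cmod (p t - q t)"
      by (simp add: p_def q_def norm_mult algebra_simps flip: distrib_left)
    then show ?thesis
      by (metis norm_triangle_ineq4)
  qed
  have pq_E: "(cmod (p t) + cmod (q t))\<^sup>2 \<le> 2 * E t" for t
    unfolding E_def power2_sum using sum_squares_bound[of "cmod (p t)" "cmod (q t)"] by simp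
  have E'_le: "E' t \<le> (2 * \<tau> + 2 * M) * E t" if t: "t \<in> {0..pi}" for t
  proof -
    have "w \<bullet> (\<i> * \<sigma> * w + of_real (V t) * y t) \<le> \<bar>Im \<sigma>\<bar> * (cmod w)\<^sup>2 + cmod w * (M * cmod (y t))"
      for w \<sigma>
    proof -
      have "cmod w * cmod (of_real (V t) * y t) \<le> cmod w * (M * cmod (y t))"
        using norm_V_mult_le[OF t] by (intro mult_left_mono) auto
      then show ?thesis
        using inner_rotation_le[of w \<sigma> "of_real (V t) * y t"] by linarith
    qed
    from this[where w="p t" and \<sigma>=s] this[where w="q t" and \<sigma>="- s"]
    have "E' t \<le> 2 * \<tau> * E t + M * (2 * cmod (y t)) * (cmod (p t) + cmod (q t))"
      unfolding E'_def E_def \<tau>_def by (simp add: algebra_simps)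
    also have "\<dots> \<le> 2 * \<tau> * E t + M * (cmod (p t) + cmod (q t))\<^sup>2"
    proof -
      have "2 * cmod (y t) \<le> 2 * cmod s * cmod (y t)"
        using s1 by (simp add: mult_right_mono)
      then have "2 * cmod (y t) \<le> cmod (p t) + cmod (q t)"
        using pq[of t] by linarith
      then have "M * (2 * cmod (y t)) * (cmod (p t) + cmod (q t))
          \<le> M * (cmod (p t) + cmod (q t)) * (cmod (p t) + cmod (q t))"
        using M_nonneg by (intro mult_right_mono mult_left_mono) auto
      then show ?thesis
        by (simp add: power2_eq_square mult.assoc)
    qed
    also have "\<dots> \<le> (2 * \<tau> + 2 * M) * E t"
      using mult_left_mono[OF pq_E M_nonneg] by (simp add: algebra_simps)
    finally show ?thesis .
  qed
  have "(2 * cmod s * cmod (y x))\<^sup>2 \<le> (cmod (p x) + cmod (q x))\<^sup>2"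
    using pq[of x] by (intro power_mono) auto
  also have "\<dots> \<le> 2 * E x"
    by (rule pq_E)
  also have "\<dots> \<le> 2 * (E 0 * exp ((2 * \<tau> + 2 * M) * x))"
    using gronwall_has_real_derivative[of pi E E' "2 * \<tau> + 2 * M" x] dE E'_le x by auto
  also have "\<dots> = (2 * cmod s * exp ((\<tau> + M) * x))\<^sup>2"
    by (simp add: E_def p_def q_def y_0 y'_0 norm_mult power_mult_distrib algebra_simps
        flip: exp_double)
  finally have "2 * cmod s * cmod (y x) \<le> 2 * cmod s * exp ((\<tau> + M) * x)"
    by (rule power2_le_imp_le) simp
  then have "cmod (y x) \<le> exp ((\<tau> + M) * x)"
    using s1 mult_le_cancel_left_pos[of "cmod s" "cmod (y x)" "exp ((\<tau> + M) * x)"]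
    by (cases "s = 0") auto
  also have "\<dots> \<le> exp (M * pi) * exp (\<tau> * x)"
    using x M_nonneg by (simp add: distrib_right exp_add mult_left_mono)
  finally show ?thesis
    by (simp add: \<tau>_def)
qed

text \<open>Variation of constants: \<open>(y' + i s y) exp (-i s x)\<close> has derivative \<open>V y exp (-i s x)\<close>,
  and for \<open>V = 0\<close> the combination would be exactly \<open>i s exp (i s x)\<close>.\<close>
lemma norm_factor_deviation_le:
  assumes s: "s\<^sup>2 = z" and s1: "1 \<le> cmod s" and x: "x \<in> {0..pi}"
  shows "cmod (y' x + \<i> * s * y x - \<i> * s * exp (\<i> * s * of_real x))
           \<le> M * exp (M * pi) * pi * exp (\<bar>Im s\<bar> * x)"
proof -
  define \<tau> where "\<tau> = \<bar>Im s\<bar>"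
  define K where "K = M * exp (M * pi)"
  define e where "e t = exp (t *\<^sub>R (- (\<i> * s)))" for t
  define g where "g t = (y' t + \<i> * s * y t) * e t" for t
  have sub: "{0..x} \<subseteq> {0..pi}" and x0: "0 \<le> x"
    using x by auto
  have de: "(e has_vector_derivative (- (\<i> * s)) * e t) (at t within S)" for t S
    unfolding e_def by (rule has_vector_derivative_eq_rhs[OF exp_scaleR_has_vector_derivative_right]) simp
  have dg: "(g has_vector_derivative of_real (V t) * y t * e t) (at t within {0..x})"
    if t: "t \<in> {0..x}" for t
  proof -
    have "(g has_vector_derivative (y' t + \<i> * s * y t) * ((- (\<i> * s)) * e t)
        + (\<i> * s * (y' t + \<i> * s * y t) + of_real (V t) * y t) * e t) (at t within {0..x})"
      unfolding g_def using t sub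
      by (intro has_vector_derivative_mult de
          has_vector_derivative_within_subset[OF has_vector_derivative_factor[OF s] sub]) auto
    then show ?thesis
      by (rule has_vector_derivative_eq_rhs) (simp add: algebra_simps)
  qed
  have g'_bound: "cmod (of_real (V t) * y t * e t) \<le> K * exp ((\<tau> + Im s) * x)"
    if t: "t \<in> {0..x}" for t
  proof -
    have t': "t \<in> {0..pi}"
      using t sub by auto
    have "cmod (of_real (V t) * y t) \<le> M * (exp (M * pi) * exp (\<tau> * t))"
      using norm_V_mult_le[OF t', of "y t"] norm_y_le_exp_if_large[OF s s1 t'] M_nonneg
      by (auto simp: \<tau>_def intro: order_trans mult_left_mono)
    then have "cmod (of_real (V t) * y t * e t) \<le> M * (exp (M * pi) * exp (\<tau> * t)) * exp (Im s * t)"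
      by (simp add: norm_mult e_def mult_right_mono mult.commute[of t])
    also have "\<dots> = K * exp ((\<tau> + Im s) * t)"
      by (simp add: K_def algebra_simps exp_add)
    also have "\<dots> \<le> K * exp ((\<tau> + Im s) * x)"
      using t M_nonneg by (auto simp: K_def \<tau>_def intro!: mult_left_mono)
    finally show ?thesis .
  qed
  have g_0: "g 0 = \<i> * s"
    by (simp add: g_def e_def y_0 y'_0)
  have "g x * exp (\<i> * s * of_real x) = y' x + \<i> * s * y x"
    by (simp add: g_def e_def scaleR_conv_of_real mult.assoc flip: exp_add)
  then have "y' x + \<i> * s * y x - \<i> * s * exp (\<i> * s * of_real x) = (g x - g 0) * exp (\<i> * s * of_real x)"
    unfolding g_0 by (simp add: algebra_simps)
  then have "cmod (y' x + \<i> * s * y x - \<i> * s * exp (\<i> * s * of_real x))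
      = cmod (g x - g 0) * exp (- Im s * x)"
    by (simp add: norm_mult norm_exp_eq_Re)
  also have "\<dots> \<le> K * exp ((\<tau> + Im s) * x) * (x - 0) * exp (- Im s * x)"
    using norm_diff_le_vector_derivative_bound[OF x0 dg g'_bound] by (intro mult_right_mono) auto
  also have "\<dots> = K * x * exp (\<tau> * x)"
    by (simp add: algebra_simps flip: exp_add)
  also have "\<dots> \<le> K * pi * exp (\<tau> * x)"
    using x M_nonneg by (auto simp: K_def intro!: mult_right_mono mult_left_mono)
  finally show ?thesis
    by (simp add: K_def \<tau>_def)
qed

lemma has_vector_derivative_cos_deviation:
  assumes s: "s\<^sup>2 = z" and x: "x \<in> {0..pi}"
  shows "((\<lambda>x. y x - cos (s * of_real x)) has_vector_derivative y' x + s * sin (s * of_real x))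
           (at x within {0..pi})"
    and "((\<lambda>x. y' x + s * sin (s * of_real x)) has_vector_derivative
           of_real (V x) * y x - z * (y x - cos (s * of_real x))) (at x within {0..pi})"
proof -
  have "((\<lambda>w. cos (s * w)) has_field_derivative - sin (s * of_real x) * s) (at (of_real x))"
    and "((\<lambda>w. s * sin (s * w)) has_field_derivative s * (cos (s * of_real x) * s)) (at (of_real x))"
    by (auto intro!: derivative_eq_intros)
  from this[THEN has_vector_derivative_real_field]
  have "((\<lambda>x. cos (s * of_real x)) has_vector_derivative - sin (s * of_real x) * s) (at x within {0..pi})"
    and "((\<lambda>x. s * sin (s * of_real x)) has_vector_derivative s * (cos (s * of_real x) * s))
      (at x within {0..pi})" .
  from has_vector_derivative_diff[OF has_vector_derivative_y[OF x] this(1)]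
    has_vector_derivative_add[OF has_vector_derivative_y'[OF x] this(2)]
  show "((\<lambda>x. y x - cos (s * of_real x)) has_vector_derivative y' x + s * sin (s * of_real x))
           (at x within {0..pi})"
    and "((\<lambda>x. y' x + s * sin (s * of_real x)) has_vector_derivative
           of_real (V x) * y x - z * (y x - cos (s * of_real x))) (at x within {0..pi})"
    by (auto elim!: has_vector_derivative_eq_rhs simp: s[symmetric] power2_eq_square algebra_simps)
qed

text \<open>Adding and subtracting the estimates for both square roots \<open>\<plusminus>s\<close> of \<open>z\<close> separates
  \<open>y' + s sin (s x)\<close> from \<open>s (y - cos (s x))\<close>.\<close>
lemma norm_cos_deviation_pair_le_if_large:
  assumes s: "s\<^sup>2 = z" and s1: "1 \<le> cmod s" and x: "x \<in> {0..pi}"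
  defines "D \<equiv> M * exp (M * pi) * pi * exp (\<bar>Im s\<bar> * x)"
  shows "cmod (y' x + s * sin (s * of_real x)) \<le> D"
    and "cmod s * cmod (y x - cos (s * of_real x)) \<le> D"
proof -
  define F where "F = y x - cos (s * of_real x)"
  define F1 where "F1 = y' x + s * sin (s * of_real x)"
  have Euler_plus: "exp (\<i> * s * of_real x) = cos (s * of_real x) + \<i> * sin (s * of_real x)"
    using exp_Euler[of "s * of_real x"] by (simp add: mult.assoc)
  have "y' x + \<i> * s * y x - \<i> * s * exp (\<i> * s * of_real x) = F1 + \<i> * s * F"
    unfolding Euler_plus F_def F1_def by (simp add: algebra_simps)
  then have plus: "cmod (F1 + \<i> * s * F) \<le> D"
    using norm_factor_deviation_le[OF s s1 x] by (simp add: D_def)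
  have Euler_minus: "exp (\<i> * (- s) * of_real x) = cos (s * of_real x) - \<i> * sin (s * of_real x)"
    using exp_Euler[of "- (s * of_real x)"] by (simp add: mult.assoc)
  have "y' x + \<i> * (- s) * y x - \<i> * (- s) * exp (\<i> * (- s) * of_real x) = F1 - \<i> * s * F"
    unfolding Euler_minus F_def F1_def by (simp add: algebra_simps)
  then have minus: "cmod (F1 - \<i> * s * F) \<le> D"
    using norm_factor_deviation_le[of "- s" x] s s1 x by (simp add: D_def)
  have "cmod (2 * F1) \<le> cmod (F1 + \<i> * s * F) + cmod (F1 - \<i> * s * F)"
    using norm_triangle_ineq[of "F1 + \<i> * s * F" "F1 - \<i> * s * F"] by simp
  with plus minus have "cmod F1 \<le> D"
    by (simp add: norm_mult)
  then show "cmod (y' x + s * sin (s * of_real x)) \<le> D"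
    by (simp add: F1_def)
  have "2 * \<i> * s * F = (F1 + \<i> * s * F) - (F1 - \<i> * s * F)"
    by simp
  then have "cmod (2 * \<i> * s * F) \<le> cmod (F1 + \<i> * s * F) + cmod (F1 - \<i> * s * F)"
    by (metis norm_triangle_ineq4)
  with plus minus have "cmod s * cmod F \<le> D"
    by (simp add: norm_mult)
  then show "cmod s * cmod (y x - cos (s * of_real x)) \<le> D"
    by (simp add: F_def)
qed

lemma norm_cos_deviation_le_if_small:
  assumes s: "s\<^sup>2 = z" and s1: "cmod s \<le> 1" and x: "x \<in> {0..pi}"
  defines "S \<equiv> (M + 1) * (exp ((M + 2) * pi / 2) + exp pi)"
  shows "cmod (y x - cos (s * of_real x)) \<le> S"
    and "cmod (y' x + s * sin (s * of_real x)) \<le> S"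
    and "cmod (of_real (V x) * y x - z * (y x - cos (s * of_real x))) \<le> S"
proof -
  define K1 where "K1 = exp ((M + 2) * pi / 2)"
  have z1: "cmod z \<le> 1"
    using s1 by (simp add: s[symmetric] norm_power power_le_one)
  have y: "cmod (y x) \<le> K1" "cmod (y' x) \<le> K1"
    using norm_y_y'_le_if_small[OF z1 x] by (auto simp: K1_def)
  have "cmod (s * of_real x) \<le> pi"
    using x s1 mult_mono[OF s1, of x pi] by (simp add: norm_mult)
  then have "\<bar>Im (s * of_real x)\<bar> \<le> pi"
    using abs_Im_le_cmod[of "s * of_real x"] by linarith
  then have cos: "cmod (cos (s * of_real x)) \<le> exp pi" and sin: "cmod (sin (s * of_real x)) \<le> exp pi"
    using cmod_cos_le_exp[of 1 "s * of_real x"] cmod_sin_le_exp[of 1 "s * of_real x"]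
    by (auto intro: order_trans)
  have S: "K1 + exp pi \<le> S"
    using mult_right_mono[of 1 "M + 1" "K1 + exp pi"] M_nonneg by (simp add: S_def K1_def)
  have F: "cmod (y x - cos (s * of_real x)) \<le> K1 + exp pi"
    using y cos norm_triangle_ineq4[of "y x" "cos (s * of_real x)"] by linarith
  then show "cmod (y x - cos (s * of_real x)) \<le> S"
    using S by linarith
  have "cmod (s * sin (s * of_real x)) \<le> exp pi"
    using mult_mono[OF s1 sin] by (simp add: norm_mult)
  then show "cmod (y' x + s * sin (s * of_real x)) \<le> S"
    using y S norm_triangle_ineq[of "y' x" "s * sin (s * of_real x)"] by linarith
  have "cmod (of_real (V x) * y x - z * (y x - cos (s * of_real x)))
      \<le> M * K1 + 1 * (K1 + exp pi)"
    using norm_triangle_ineq4[of "of_real (V x) * y x" "z * (y x - cos (s * of_real x))"]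
      norm_V_mult_le[OF x, of "y x"] mult_left_mono[OF y(1) M_nonneg] mult_mono[OF z1 F]
    by (simp add: norm_mult)
  also have "\<dots> \<le> S"
    using M_nonneg by (simp add: S_def K1_def algebra_simps)
  finally show "cmod (of_real (V x) * y x - z * (y x - cos (s * of_real x))) \<le> S" .
qed

lemma norm_cos_deviation_le_if_large:
  assumes s: "s\<^sup>2 = z" and s1: "1 \<le> cmod s" and x: "x \<in> {0..pi}"
  defines "L \<equiv> M * exp (M * pi) * (1 + pi) * ((1 + cmod s) * exp (pi * \<bar>Im s\<bar>))"
  shows "cmod (y x - cos (s * of_real x)) \<le> L"
    and "cmod (y' x + s * sin (s * of_real x)) \<le> L"
    and "cmod (of_real (V x) * y x - z * (y x - cos (s * of_real x))) \<le> L"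
proof -
  define e where "e = exp (pi * \<bar>Im s\<bar>)"
  define K where "K = exp (M * pi)"
  define D where "D = M * K * pi * e"
  have "\<bar>Im s\<bar> * x \<le> \<bar>Im s\<bar> * pi"
    using x by (intro mult_left_mono) auto
  then have ex: "exp (\<bar>Im s\<bar> * x) \<le> e"
    by (simp add: e_def mult.commute)
  have MKe: "0 \<le> M * K * e"
    using M_nonneg by (simp add: K_def e_def)
  have "M * exp (M * pi) * pi * exp (\<bar>Im s\<bar> * x) \<le> D"
    using ex M_nonneg by (simp add: D_def K_def mult_left_mono)
  then have F1: "cmod (y' x + s * sin (s * of_real x)) \<le> D"
    and sF: "cmod s * cmod (y x - cos (s * of_real x)) \<le> D"
    using norm_cos_deviation_pair_le_if_large[OF s s1 x] by linarith+
  have F: "cmod (y x - cos (s * of_real x)) \<le> D"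
    using sF mult_right_mono[OF s1 norm_ge_zero[of "y x - cos (s * of_real x)"]] by linarith
  have "cmod (y x) \<le> K * e"
    unfolding K_def using norm_y_le_exp_if_large[OF s s1 x] ex
    by (meson exp_gt_zero mult_le_cancel_left_pos order_trans)
  then have "cmod (of_real (V x) * y x) \<le> M * (K * e)"
    using norm_V_mult_le[OF x, of "y x"] M_nonneg by (meson mult_left_mono order_trans)
  moreover have "cmod (z * (y x - cos (s * of_real x))) \<le> cmod s * D"
    using mult_left_mono[OF sF, of "cmod s"]
    by (simp add: s[symmetric] norm_mult norm_power power2_eq_square mult.assoc)
  ultimately have F2: "cmod (of_real (V x) * y x - z * (y x - cos (s * of_real x))) \<le> M * (K * e) + cmod s * D"
    using norm_triangle_ineq4[of "of_real (V x) * y x" "z * (y x - cos (s * of_real x))"] by linarith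
  have "L = M * (K * e) + cmod s * D + M * K * e * (pi + cmod s)"
    and "L = D + M * K * e * (1 + cmod s + cmod s * pi)"
    by (simp_all add: L_def D_def K_def e_def algebra_simps)
  moreover have "0 \<le> M * K * e * (pi + cmod s)" and "0 \<le> M * K * e * (1 + cmod s + cmod s * pi)"
    using MKe by simp_all
  ultimately show "cmod (y x - cos (s * of_real x)) \<le> L"
    and "cmod (y' x + s * sin (s * of_real x)) \<le> L"
    and "cmod (of_real (V x) * y x - z * (y x - cos (s * of_real x))) \<le> L"
    using F F1 F2 by linarith+
qed

lemma norm_cos_deviation_le:
  assumes s: "s\<^sup>2 = z" and x: "x \<in> {0..pi}"
  defines "B \<equiv> deviation_constant M * ((1 + cmod s) * exp (pi * \<bar>Im s\<bar>))"
  shows "cmod (y x - cos (s * of_real x)) \<le> B"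
    and "cmod (y' x + s * sin (s * of_real x)) \<le> B"
    and "cmod (of_real (V x) * y x - z * (y x - cos (s * of_real x))) \<le> B"
proof -
  have grow: "1 \<le> (1 + cmod s) * exp (pi * \<bar>Im s\<bar>)"
    using mult_mono[of 1 "1 + cmod s" 1 "exp (pi * \<bar>Im s\<bar>)"] by simp
  consider "1 \<le> cmod s" | "cmod s \<le> 1"
    by linarith
  then have "cmod (y x - cos (s * of_real x)) \<le> B \<and> cmod (y' x + s * sin (s * of_real x)) \<le> B
      \<and> cmod (of_real (V x) * y x - z * (y x - cos (s * of_real x))) \<le> B"
  proof cases
    case 1
    have "M * exp (M * pi) * (1 + pi) \<le> deviation_constant M"
      using M_nonneg by (simp add: deviation_constant_def algebra_simps)
    then have "M * exp (M * pi) * (1 + pi) * ((1 + cmod s) * exp (pi * \<bar>Im s\<bar>)) \<le> B"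
      unfolding B_def by (rule mult_right_mono) simp
    then show ?thesis
      using norm_cos_deviation_le_if_large[OF s 1 x] by linarith
  next
    case 2
    have "(M + 1) * (exp ((M + 2) * pi / 2) + exp pi) \<le> deviation_constant M"
      using M_nonneg by (simp add: deviation_constant_def algebra_simps)
    also have "\<dots> \<le> B"
      using mult_left_mono[OF grow, of "deviation_constant M"] deviation_constant_pos[OF M_nonneg]
      by (simp add: B_def)
    finally show ?thesis
      using norm_cos_deviation_le_if_small[OF s 2 x] by linarith
  qed
  then show "cmod (y x - cos (s * of_real x)) \<le> B"
    and "cmod (y' x + s * sin (s * of_real x)) \<le> B"
    and "cmod (of_real (V x) * y x - z * (y x - cos (s * of_real x))) \<le> B"
    by auto
qed

lemma norm_integral_R_api_cos_deviation_le:
  assumes a: "0 < a" "a < pi" and n: "n \<ge> 1"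
  shows "cmod (integral {0..pi} (\<lambda>x. (y x - cos (csqrt z * of_real x))
                    * of_real (R_api a x) * of_real (cos (real n * x))))
         \<le> 2 * pi * (3 + 2 / (pi - a) + pi) * deviation_constant M * exp (pi * \<bar>Im (csqrt z)\<bar>)
             / (real n)\<^sup>2 * (1 + (1 + cmod z) / (1 + pi * sqrt (cmod z)))"
proof -
  define s where "s = csqrt z"
  define W where "W = 3 + 2 / (pi - a) + pi"
  define B where "B = deviation_constant M * ((1 + cmod s) * exp (pi * \<bar>Im s\<bar>))"
  define G where "G = 1 + (1 + cmod z) / (1 + pi * sqrt (cmod z))"
  have s: "s\<^sup>2 = z"
    by (simp add: s_def)
  have bounds: "cmod (y x - cos (s * of_real x)) \<le> B \<and> cmod (y' x + s * sin (s * of_real x)) \<le> B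
      \<and> cmod (of_real (V x) * y x - z * (y x - cos (s * of_real x))) \<le> B"
    if "x \<in> {0..pi}" for x
    unfolding B_def using norm_cos_deviation_le[OF s that] by blast
  have "cmod (integral {0..pi} (\<lambda>x. (y x - cos (s * of_real x))
                    * of_real (R_api a x) * of_real (cos (real n * x)))) \<le> W * B / (real n)\<^sup>2"
    unfolding W_def
    by (rule integral_R_api_times_cos_bound[OF a n]; fact bounds has_vector_derivative_cos_deviation[OF s])
  also have "\<dots> \<le> 2 * pi * W * deviation_constant M * exp (pi * \<bar>Im s\<bar>) / (real n)\<^sup>2 * G"
  proof -
    have "0 \<le> W * deviation_constant M * exp (pi * \<bar>Im s\<bar>)"
      using a M_nonneg deviation_constant_pos by (simp add: W_def less_imp_le)
    moreover have "1 + cmod s \<le> 2 * pi * G"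
      using one_plus_sqrt_le[of "cmod z"] by (simp add: s_def G_def)
    ultimately have "W * B \<le> 2 * pi * W * deviation_constant M * exp (pi * \<bar>Im s\<bar>) * G"
      using mult_left_mono by (fastforce simp: B_def mult_ac)
    then show ?thesis
      by (simp add: divide_right_mono)
  qed
  finally show ?thesis
    by (simp add: s_def W_def G_def)
qed

end

theorem lemmaA6:
  fixes V :: "real \<Rightarrow> real" and a :: real
    and xi :: "real \<Rightarrow> complex \<Rightarrow> complex" and dxi :: "real \<Rightarrow> complex \<Rightarrow> complex"
  assumes "abs_continuous_on 0 pi V"
    and "0 < a" and "a < pi"
    and "\<And>z. is_xi_solution V z (\<lambda>x. xi x z) (\<lambda>x. dxi x z)"
  shows "\<exists>C>0. \<forall>(z::complex) (n::nat). n \<ge> 1 \<longrightarrow>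
           cmod (integral {0..pi} (\<lambda>x. (xi x z - cos (csqrt z * complex_of_real x))
                    * complex_of_real (R_api a x) * complex_of_real (cos (real n * x))))
           \<le> C * exp (pi * \<bar>Im (csqrt z)\<bar>) / (real n)\<^sup>2
               * (1 + (1 + cmod z) / (1 + pi * sqrt (cmod z)))"
proof -
  obtain M where "M > 0" and V_bound: "\<And>x. x \<in> {0..pi} \<Longrightarrow> \<bar>V x\<bar> \<le> M"
    using abs_continuous_on_imp_continuous_on[OF assms(1)] compact_Icc
    by (metis bounded_pos compact_continuous_image compact_imp_bounded image_eqI real_norm_def)
  define C where "C = 2 * pi * (3 + 2 / (pi - a) + pi) * deviation_constant M"
  have "0 < C"
    using \<open>M > 0\<close> assms(2,3) deviation_constant_pos[of M] by (simp add: C_def add_pos_pos)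
  show ?thesis
  proof (intro exI[of _ C] conjI allI impI \<open>0 < C\<close>)
    fix z :: complex and n :: nat
    assume "n \<ge> 1"
    interpret xi_ivp V M z "\<lambda>x. xi x z" "\<lambda>x. dxi x z"
      using assms(4) V_bound by unfold_locales
    show "cmod (integral {0..pi} (\<lambda>x. (xi x z - cos (csqrt z * complex_of_real x))
                    * complex_of_real (R_api a x) * complex_of_real (cos (real n * x))))
           \<le> C * exp (pi * \<bar>Im (csqrt z)\<bar>) / (real n)\<^sup>2
               * (1 + (1 + cmod z) / (1 + pi * sqrt (cmod z)))"
      using norm_integral_R_api_cos_deviation_le[OF assms(2,3) \<open>n \<ge> 1\<close>] by (simp add: C_def)
  qed
qed

end
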